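(* Let $A$ be a linearly closed proper subset of the abstract linear space $LS^3$. Then $A$ can be topologically embedded in $\mathbb{C}$, i.e. there is a continuous injective map $f:A\to\mathbb{C}$.
   Context: $\mathbb{S}^3$ is the unit sphere of $\mathbb{C}^2$. The abstract linear space $LS^3$ has point set $\mathbb{S}^3$ and abstract lines the sets $L\cap\mathbb{S}^3$ where $L$ is a complex affine line of $\mathbb{C}^2$ meeting $\mathbb{S}^3$ in more than one point; any two distinct points of $\mathbb{S}^3$ lie on exactly one abstract line. A subset $A\subset\mathbb{S}^3$ is linearly closed if for any two distinct $x,y\in A$ the abstract line through $x$ and $y$ is contained in $A$. Proper means $A\neq\mathbb{S}^3$. *)

theory Defs
  imports "HOL-Analysis.Analysis"
begin

text \<open>C^2 is modelled as complex \<times> complex (with its product = Euclidean topology).\<close>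

definition S3 :: "(complex \<times> complex) set" where
  "S3 = {p. (cmod (fst p))\<^sup>2 + (cmod (snd p))\<^sup>2 = 1}"

definition complex_affine_line :: "(complex \<times> complex) set \<Rightarrow> bool" where
  "complex_affine_line L \<longleftrightarrow>
     (\<exists>p v. v \<noteq> 0 \<and> L = {(fst p + t * fst v, snd p + t * snd v) | t. True})"

text \<open>Abstract lines of LS^3: L \<inter> S3 with L a complex affine line meeting S3 in more than one point.\<close>
definition abstract_lines :: "(complex \<times> complex) set set" where
  "abstract_lines = {L \<inter> S3 | L. complex_affine_line L \<and>
       (\<exists>x y. x \<noteq> y \<and> x \<in> L \<inter> S3 \<and> y \<in> L \<inter> S3)}"

definition linearly_closed :: "(complex \<times> complex) set \<Rightarrow> bool" where
  "linearly_closed A \<longleftrightarrow> A \<subseteq> S3 \<and>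
     (\<forall>x\<in>A. \<forall>y\<in>A. x \<noteq> y \<longrightarrow> (\<forall>l\<in>abstract_lines. x \<in> l \<and> y \<in> l \<longrightarrow> l \<subseteq> A))"

end

theory Submission
  imports Defs
begin

text \<open>
  Pick a point \<open>q = (a, b)\<close> of \<open>S3\<close> outside \<open>A\<close> and project \<open>A\<close> from \<open>q\<close>: the map
  \<open>p \<mapsto> (a p\<^sub>2 - b p\<^sub>1) / (\<langle>p, q\<rangle> - 1)\<close> is continuous away from \<open>q\<close>, because a point of \<open>S3\<close>
  has Hermitian product \<open>1\<close> with \<open>q\<close> only if it equals \<open>q\<close>. Writing
  \<open>p - q = (\<langle>p, q\<rangle> - 1) q + (a p\<^sub>2 - b p\<^sub>1) q\<^sup>\<bottom>\<close>, two points with the same image satisfy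
  \<open>y - q \<in> \<complex> (x - q)\<close>, so \<open>q\<close> lies on the complex line through \<open>x\<close> and \<open>y\<close>. If \<open>x \<noteq> y\<close>
  were both in \<open>A\<close>, linear closedness would force \<open>q \<in> A\<close>.
\<close>

definition hinner :: "complex \<times> complex \<Rightarrow> complex \<times> complex \<Rightarrow> complex" where
  "hinner p q = fst p * cnj (fst q) + snd p * cnj (snd q)"

definition proj_from :: "complex \<times> complex \<Rightarrow> complex \<times> complex \<Rightarrow> complex" where
  "proj_from q p = (fst q * snd p - snd q * fst p) / (hinner p q - 1)"

definition line_through :: "complex \<times> complex \<Rightarrow> complex \<times> complex \<Rightarrow> (complex \<times> complex) set" where
  "line_through p v = {(fst p + t * fst v, snd p + t * snd v) | t. True}"

lemma hinner_self: "hinner p p = of_real ((cmod (fst p))\<^sup>2 + (cmod (snd p))\<^sup>2)"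
  by (simp only: hinner_def of_real_add complex_norm_square)

lemma hinner_self_eq_0_iff: "hinner p p = 0 \<longleftrightarrow> p = 0"
proof -
  have "hinner p p = 0 \<longleftrightarrow> (cmod (fst p))\<^sup>2 + (cmod (snd p))\<^sup>2 = 0"
    by (simp only: hinner_self of_real_eq_0_iff)
  then show ?thesis
    by (simp add: add_nonneg_eq_0_iff prod_eq_iff)
qed

lemma hinner_commute: "hinner q p = cnj (hinner p q)"
  by (simp add: hinner_def mult.commute)

lemma S3_iff_hinner_self: "p \<in> S3 \<longleftrightarrow> hinner p p = 1"
  by (simp only: S3_def hinner_self mem_Collect_eq of_real_eq_1_iff)

lemma S3_hinner_eq_1_imp_eq:
  assumes "x \<in> S3" "q \<in> S3" "hinner x q = 1"
  shows "x = q"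
proof -
  have "hinner (x - q) (x - q) = hinner x x + hinner q q - hinner x q - hinner q x"
    by (simp add: hinner_def algebra_simps)
  also have "\<dots> = 0"
    using assms by (simp add: S3_iff_hinner_self hinner_commute[of q x])
  finally show ?thesis
    by (simp add: hinner_self_eq_0_iff)
qed

lemma complex_affine_line_line_through: "v \<noteq> 0 \<Longrightarrow> complex_affine_line (line_through p v)"
  unfolding complex_affine_line_def line_through_def by blast

lemma line_through_base: "p \<in> line_through p v"
  unfolding line_through_def by (rule CollectI, rule exI[of _ 0]) (simp add: prod_eq_iff)

lemma line_through_diff: "x \<in> line_through p (x - p)"
  unfolding line_through_def by (rule CollectI, rule exI[of _ 1]) (simp add: prod_eq_iff)

text \<open>Coordinates of \<open>p - q\<close> in the unitary basis \<open>q, (- cnj b, cnj a)\<close> of \<open>\<complex>\<^sup>2\<close>.\<close>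

lemma diff_unit_decomp:
  assumes "q \<in> S3"
  shows "fst p - fst q = (hinner p q - 1) * fst q - (fst q * snd p - snd q * fst p) * cnj (snd q)"
    and "snd p - snd q = (hinner p q - 1) * snd q + (fst q * snd p - snd q * fst p) * cnj (fst q)"
proof -
  have q: "hinner q q = 1"
    using assms by (simp add: S3_iff_hinner_self)
  have "(hinner p q - 1) * fst q - (fst q * snd p - snd q * fst p) * cnj (snd q)
      = fst p * hinner q q - fst q"
    by (simp add: hinner_def algebra_simps)
  then show "fst p - fst q = (hinner p q - 1) * fst q - (fst q * snd p - snd q * fst p) * cnj (snd q)"
    using q by simp
  have "(hinner p q - 1) * snd q + (fst q * snd p - snd q * fst p) * cnj (fst q)
      = snd p * hinner q q - snd q"
    by (simp add: hinner_def algebra_simps)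
  then show "snd p - snd q = (hinner p q - 1) * snd q + (fst q * snd p - snd q * fst p) * cnj (fst q)"
    using q by simp
qed

lemma proj_from_eq_imp_in_line_through:
  assumes q: "q \<in> S3"
    and dx: "hinner x q \<noteq> 1" and dy: "hinner y q \<noteq> 1"
    and eq: "proj_from q x = proj_from q y"
  shows "y \<in> line_through q (x - q)"
proof -
  define D where "D p = hinner p q - 1" for p
  define N where "N p = fst q * snd p - snd q * fst p" for p
  have "D x \<noteq> 0" "D y \<noteq> 0"
    using dx dy by (auto simp: D_def)
  then have cross: "N x * D y = N y * D x"
    using eq by (simp add: proj_from_def D_def N_def field_simps)
  define s where "s = D y / D x"
  have scale: "s * D x = D y" "s * N x = N y"
    using cross \<open>D x \<noteq> 0\<close> by (simp_all add: s_def field_simps)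
  have diff: "fst y - fst q = s * (fst x - fst q)" "snd y - snd q = s * (snd x - snd q)"
    unfolding diff_unit_decomp[OF q, folded D_def N_def]
    by (simp_all only: right_diff_distrib distrib_left mult.assoc[symmetric] scale)
  have "y = (fst q + (fst y - fst q), snd q + (snd y - snd q))"
    by simp
  also have "\<dots> = (fst q + s * fst (x - q), snd q + s * snd (x - q))"
    by (simp only: diff fst_diff snd_diff)
  finally have "y = (fst q + s * fst (x - q), snd q + s * snd (x - q))" .
  then show ?thesis
    unfolding line_through_def by blast
qed

lemma continuous_on_proj_from:
  assumes "\<And>p. p \<in> A \<Longrightarrow> hinner p q \<noteq> 1"
  shows "continuous_on A (proj_from q)"
  unfolding proj_from_def
proof (rule continuous_on_divide)
  show "continuous_on A (\<lambda>p. fst q * snd p - snd q * fst p)"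
    by (intro continuous_intros)
  show "continuous_on A (\<lambda>p. hinner p q - 1)"
    unfolding hinner_def by (intro continuous_intros)
qed (use assms in simp)

lemma linearly_closed_line_subset:
  assumes A: "linearly_closed A" and L: "complex_affine_line L"
    and x: "x \<in> L \<inter> A" and y: "y \<in> L \<inter> A" and "x \<noteq> y"
  shows "L \<inter> S3 \<subseteq> A"
proof -
  have xS: "x \<in> L \<inter> S3" and yS: "y \<in> L \<inter> S3"
    using A x y by (auto simp: linearly_closed_def)
  have "L \<inter> S3 \<in> abstract_lines"
    unfolding abstract_lines_def
    by (rule CollectI, rule exI[of _ L]) (use L xS yS \<open>x \<noteq> y\<close> in blast)
  moreover have "\<forall>x\<in>A. \<forall>y\<in>A. x \<noteq> y \<longrightarrow> (\<forall>l\<in>abstract_lines. x \<in> l \<and> y \<in> l \<longrightarrow> l \<subseteq> A)"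
    using A by (simp add: linearly_closed_def)
  ultimately show ?thesis
    using x y xS yS \<open>x \<noteq> y\<close> by (meson IntD1 IntD2)
qed

theorem lemma3p4:
  fixes A :: "(complex \<times> complex) set"
  assumes "linearly_closed A"
    and "A \<noteq> S3"
  shows "\<exists>f :: complex \<times> complex \<Rightarrow> complex. continuous_on A f \<and> inj_on f A"
proof -
  have "A \<subseteq> S3"
    using assms(1) by (simp add: linearly_closed_def)
  then obtain q where q: "q \<in> S3" "q \<notin> A"
    using assms(2) by blast
  have off_q: "hinner p q \<noteq> 1" if "p \<in> A" for p
    using S3_hinner_eq_1_imp_eq[of p q] \<open>A \<subseteq> S3\<close> q that by auto
  have "inj_on (proj_from q) A"
  proof (rule inj_onI, rule ccontr)
    fix x y
    assume x: "x \<in> A" and y: "y \<in> A" and eq: "proj_from q x = proj_from q y" and "x \<noteq> y"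
    let ?L = "line_through q (x - q)"
    have "x - q \<noteq> 0"
      using x q(2) by auto
    have "y \<in> ?L"
      using proj_from_eq_imp_in_line_through[OF q(1) off_q[OF x] off_q[OF y] eq] .
    then have "?L \<inter> S3 \<subseteq> A"
      using linearly_closed_line_subset[OF assms(1) complex_affine_line_line_through[OF \<open>x - q \<noteq> 0\<close>]]
        x y line_through_diff \<open>x \<noteq> y\<close> by blast
    then show False
      using line_through_base q by blast
  qed
  then show ?thesis
    using continuous_on_proj_from[OF off_q] by blast
qed

end
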